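(* Let $R$ be a unital ring with involution and let $a,b\in R$ both be core invertible. Then the following are equivalent: (1) $a\overset{\circledast}{\leq} b$; (2) $a\ {*}\!\leq b$ and $ba^{\circledast}b=a$; (3) $a\ {*}\!\leq b$ and $b^{\circledast}aa^{\circledast}=a^{\circledast}$; (4) $a\ {*}\!\leq b$ and $b^{\circledast}ab^{\circledast}=a^{\circledast}$; (5) $a\leq_{\#} b$ and $ba^{\circledast}b=a$; (6) $a\leq_{\#} b$ and $a^{\circledast}ab^{\circledast}=a^{\circledast}$.
   Context: $R$ is a ring with identity and an involution $x\mapsto x^{*}$. An element $a\in R$ is core invertible if there exists $x\in R$ with $axa=a$, $xR=aR$ and $Rx=Ra^{*}$; such $x$ is unique, called the core inverse of $a$ and denoted $a^{\circledast}$. Every core invertible element $a$ is group invertible, where the group inverse $a^{\#}$ is the unique $x$ with $axa=a$, $xax=x$, $ax=xa$. For $a$ core invertible and $b\in R$, $a\overset{\circledast}{\leq} b$ means $a^{\circledast}a=a^{\circledast}b$ and $aa^{\circledast}=ba^{\circledast}$. The left star partial order: $a\ {*}\!\leq b$ means $a^{*}a=a^{*}b$ and $aR\subseteq bR$. The right sharp partial order (for group invertible $a$): $a\leq_{\#} b$ means $aa^{\#}=ba^{\#}$ and $Ra\subseteq Rb$. *)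

theory Defs
  imports Main
begin

class ring_inv = ring_1 +
  fixes invol :: "'a \<Rightarrow> 'a"  ("_\<^sup>\<star>" [1000] 999)
  assumes invol_invol: "(x\<^sup>\<star>)\<^sup>\<star> = x"
    and invol_add: "(x + y)\<^sup>\<star> = x\<^sup>\<star> + y\<^sup>\<star>"
    and invol_mult: "(x * y)\<^sup>\<star> = y\<^sup>\<star> * x\<^sup>\<star>"

definition right_ideal :: "'a::ring_1 \<Rightarrow> 'a set" where
  "right_ideal a = {a * r | r. True}"

definition left_ideal :: "'a::ring_1 \<Rightarrow> 'a set" where
  "left_ideal a = {r * a | r. True}"

definition is_core_inverse :: "'a::ring_inv \<Rightarrow> 'a \<Rightarrow> bool" where
  "is_core_inverse a x \<longleftrightarrow> a * x * a = a \<and> right_ideal x = right_ideal a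
      \<and> left_ideal x = left_ideal (a\<^sup>\<star>)"

definition core_invertible :: "'a::ring_inv \<Rightarrow> bool" where
  "core_invertible a \<longleftrightarrow> (\<exists>x. is_core_inverse a x)"

definition core_inv :: "'a::ring_inv \<Rightarrow> 'a" where
  "core_inv a = (THE x. is_core_inverse a x)"

definition is_group_inverse :: "'a::ring_1 \<Rightarrow> 'a \<Rightarrow> bool" where
  "is_group_inverse a x \<longleftrightarrow> a * x * a = a \<and> x * a * x = x \<and> a * x = x * a"

definition group_inv :: "'a::ring_1 \<Rightarrow> 'a" where
  "group_inv a = (THE x. is_group_inverse a x)"

definition core_le :: "'a::ring_inv \<Rightarrow> 'a \<Rightarrow> bool" where
  "core_le a b \<longleftrightarrow> core_inv a * a = core_inv a * b \<and> a * core_inv a = b * core_inv a"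

definition left_star_le :: "'a::ring_inv \<Rightarrow> 'a \<Rightarrow> bool" where
  "left_star_le a b \<longleftrightarrow> a\<^sup>\<star> * a = a\<^sup>\<star> * b \<and> right_ideal a \<subseteq> right_ideal b"

definition right_sharp_le :: "'a::ring_1 \<Rightarrow> 'a \<Rightarrow> bool" where
  "right_sharp_le a b \<longleftrightarrow> a * group_inv a = b * group_inv a \<and> left_ideal a \<subseteq> left_ideal b"

end

theory Submission
  imports Defs
begin

(*
  For a core inverse x of a, the element a x is a Hermitian idempotent with range aR, and
  x generates the same left ideal as a* (the group inverse x x a generates the same
  right ideal as x). Hence the left star order amounts to x b = x a together with a \<in> bR,
  the right sharp order to b x = a x together with a \<in> Rb, and the core order to both
  x b = x a and b x = a x. Each of the remaining conditions is then matched with the missing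
  equation by short computations, using that b y fixes bR for a core inverse y of b.
*)

lemma right_ideal_self: "a \<in> right_ideal (a::'a::ring_1)"
  unfolding right_ideal_def by (auto intro: exI[of _ 1])

lemma left_ideal_self: "a \<in> left_ideal (a::'a::ring_1)"
  unfolding left_ideal_def by (auto intro: exI[of _ 1])

lemma right_ideal_subset_iff:
  "right_ideal a \<subseteq> right_ideal b \<longleftrightarrow> (\<exists>r. a = b * r)" for a b :: "'a::ring_1"
proof
  assume "right_ideal a \<subseteq> right_ideal b"
  then show "\<exists>r. a = b * r" using right_ideal_self[of a] by (auto simp: right_ideal_def)
qed (auto simp: right_ideal_def mult.assoc)

lemma left_ideal_subset_iff:
  "left_ideal a \<subseteq> left_ideal b \<longleftrightarrow> (\<exists>r. a = r * b)" for a b :: "'a::ring_1"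
proof
  assume "left_ideal a \<subseteq> left_ideal b"
  then show "\<exists>r. a = r * b" using left_ideal_self[of a] by (auto simp: left_ideal_def)
qed (auto simp: left_ideal_def mult.assoc[symmetric])

lemma left_ideal_eq_imp_mult_eq_iff:
  fixes p q :: "'a::ring_1"
  assumes "left_ideal p = left_ideal q"
  shows "p * b = p * c \<longleftrightarrow> q * b = q * c"
proof -
  obtain u v where "p = u * q" "q = v * p"
    using assms left_ideal_subset_iff by (metis order_refl)
  then show ?thesis by (metis mult.assoc)
qed

lemma right_ideal_eq_imp_mult_eq_iff:
  fixes p q :: "'a::ring_1"
  assumes "right_ideal p = right_ideal q"
  shows "b * p = c * p \<longleftrightarrow> b * q = c * q"
proof -
  obtain u v where "p = q * u" "q = p * v"
    using assms right_ideal_subset_iff by (metis order_refl)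
  then show ?thesis by (metis mult.assoc)
qed

context
  fixes a x :: "'a::ring_inv"
  assumes core: "is_core_inverse a x"
begin

lemma core_inverse_outer: "a * x * a = a"
  using core by (simp add: is_core_inverse_def)

lemma core_inverse_eq_invol: "x * x\<^sup>\<star> * a\<^sup>\<star> = x"
proof -
  obtain w where w: "x = w * a\<^sup>\<star>"
    using core left_ideal_subset_iff unfolding is_core_inverse_def by (metis order_refl)
  have "a\<^sup>\<star> = (a * x * a)\<^sup>\<star>" using core_inverse_outer by simp
  also have "\<dots> = a\<^sup>\<star> * x\<^sup>\<star> * a\<^sup>\<star>" by (simp add: invol_mult mult.assoc)
  finally have "w * a\<^sup>\<star> = w * a\<^sup>\<star> * x\<^sup>\<star> * a\<^sup>\<star>" by (simp add: mult.assoc)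
  then show ?thesis using w by simp
qed

lemma core_inverse_hermitian: "(a * x)\<^sup>\<star> = a * x"
proof -
  have "(a * x) * (a * x)\<^sup>\<star> = a * (x * x\<^sup>\<star> * a\<^sup>\<star>)" by (simp add: invol_mult mult.assoc)
  then have ax: "a * x = (a * x) * (a * x)\<^sup>\<star>" using core_inverse_eq_invol by simp
  have "((a * x) * (a * x)\<^sup>\<star>)\<^sup>\<star> = (a * x) * (a * x)\<^sup>\<star>" by (simp add: invol_mult invol_invol)
  then show ?thesis using ax by simp
qed

lemma core_inverse_inner: "x * a * x = x"
proof -
  have "x * a * x = x * (a * x)\<^sup>\<star>" using core_inverse_hermitian by (simp add: mult.assoc)
  also have "\<dots> = x" using core_inverse_eq_invol by (simp add: invol_mult mult.assoc)
  finally show ?thesis .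
qed

lemma core_inverse_left_absorb: "x * a * a = a"
proof -
  obtain v where "a = x * v"
    using core right_ideal_subset_iff unfolding is_core_inverse_def by (metis order_refl)
  then show ?thesis using core_inverse_inner by (metis mult.assoc)
qed

lemma core_inverse_right_absorb: "a * x * x = x"
proof -
  obtain u where "x = a * u"
    using core right_ideal_subset_iff unfolding is_core_inverse_def by (metis order_refl)
  then show ?thesis using core_inverse_outer by (metis mult.assoc)
qed

lemma core_inverse_range_fixed:
  assumes "c \<in> right_ideal a"
  shows "a * x * c = c" "c\<^sup>\<star> * a * x = c\<^sup>\<star>"
proof -
  obtain r where "c = a * r" using assms by (auto simp: right_ideal_def)
  then show fixed: "a * x * c = c" using core_inverse_outer by (metis mult.assoc)
  have "c\<^sup>\<star> * (a * x) = (a * x * c)\<^sup>\<star>"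
    using core_inverse_hermitian by (simp add: invol_mult)
  then show "c\<^sup>\<star> * a * x = c\<^sup>\<star>" using fixed by (simp add: mult.assoc)
qed

lemma core_inverse_mult_eq:
  assumes "a\<^sup>\<star> * a * z = a\<^sup>\<star>"
  shows "a * z = a * x"
proof -
  have "a * x = x\<^sup>\<star> * a\<^sup>\<star>" using core_inverse_hermitian by (simp add: invol_mult)
  also have "\<dots> = (a * x)\<^sup>\<star> * a * z" using assms by (simp add: invol_mult mult.assoc)
  also have "\<dots> = a * z" using core_inverse_hermitian core_inverse_outer by simp
  finally show ?thesis by simp
qed

lemma core_inverse_group_inverse: "is_group_inverse a (x * x * a)"
proof -
  have ag: "a * (x * x * a) = x * a" using core_inverse_right_absorb by (metis mult.assoc)
  have ga: "x * x * a * a = x * a" using core_inverse_left_absorb by (simp add: mult.assoc)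
  show ?thesis unfolding is_group_inverse_def
    using ag ga core_inverse_inner core_inverse_left_absorb by (simp add: mult.assoc)
qed

end

lemma core_inverse_unique:
  assumes "is_core_inverse a x" "is_core_inverse a y"
  shows "x = y"
proof -
  have "(a * x)\<^sup>\<star> = (a * y * a * x)\<^sup>\<star>" using core_inverse_outer[OF assms(2)] by simp
  also have "\<dots> = (a * x)\<^sup>\<star> * (a * y)\<^sup>\<star>" by (simp add: invol_mult mult.assoc)
  also have "\<dots> = a * x * a * y"
    using core_inverse_hermitian[OF assms(1)] core_inverse_hermitian[OF assms(2)]
    by (simp add: mult.assoc)
  also have "\<dots> = a * y" using core_inverse_outer[OF assms(1)] by simp
  finally have axy: "a * x = a * y" using core_inverse_hermitian[OF assms(1)] by simp
  have "x = x * a * (a * y * y)"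
    using core_inverse_inner[OF assms(1)] core_inverse_right_absorb[OF assms(2)] axy
    by (simp add: mult.assoc)
  also have "\<dots> = y" using core_inverse_left_absorb[OF assms(1)] core_inverse_right_absorb[OF assms(2)]
    by (metis mult.assoc)
  finally show ?thesis .
qed

lemma core_inv_eq: "is_core_inverse a x \<Longrightarrow> core_inv a = x"
  unfolding core_inv_def using core_inverse_unique by blast

lemma core_invertible_core_inv: "core_invertible a \<Longrightarrow> is_core_inverse a (core_inv a)"
  unfolding core_invertible_def using core_inv_eq by metis

lemma group_inverse_unique:
  fixes a g h :: "'a::ring_1"
  assumes "is_group_inverse a g" "is_group_inverse a h"
  shows "g = h"
proof -
  have g: "a * g * a = a" "g * a * g = g" "a * g = g * a"
    and h: "a * h * a = a" "h * a * h = h" "a * h = h * a"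
    using assms by (auto simp: is_group_inverse_def)
  have "g = g * (a * h * a) * g" using g h by simp
  also have "\<dots> = (g * a) * h * (a * g)" by (simp add: mult.assoc)
  also have "\<dots> = h * (a * g * a) * h" using g h by (metis mult.assoc)
  also have "\<dots> = h" using g h by simp
  finally show ?thesis .
qed

lemma group_inv_eq: "is_group_inverse a g \<Longrightarrow> group_inv a = g"
  unfolding group_inv_def using group_inverse_unique by blast

lemma sandwich_iff_right_eq:
  fixes a b x :: "'a::semigroup_mult"
  assumes "a * x * a = a" "x * a * x = x" "x * b = x * a"
  shows "b * x * b = a \<longleftrightarrow> b * x = a * x"
proof
  assume "b * x * b = a"
  then have "b * x = b * x * b * x" using assms(2,3) by (metis mult.assoc)
  then show "b * x = a * x" using \<open>b * x * b = a\<close> by simp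
next
  assume "b * x = a * x"
  then show "b * x * b = a" using assms(1,3) by (metis mult.assoc)
qed

lemma sandwich_iff_left_eq:
  fixes a b x :: "'a::semigroup_mult"
  assumes "a * x * a = a" "x * a * x = x" "b * x = a * x"
  shows "b * x * b = a \<longleftrightarrow> x * b = x * a"
proof
  assume "b * x * b = a"
  then have "x * b = x * (b * x * b)" using assms(2,3) by (metis mult.assoc)
  then show "x * b = x * a" using \<open>b * x * b = a\<close> by simp
next
  assume "x * b = x * a"
  then show "b * x * b = a" using assms(1,3) by (metis mult.assoc)
qed

context
  fixes a b x :: "'a::ring_inv"
  assumes core: "is_core_inverse a x"
begin

lemma core_le_iff: "core_le a b \<longleftrightarrow> x * b = x * a \<and> b * x = a * x"
  using core_inv_eq[OF core] by (auto simp: core_le_def)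

lemma left_star_le_iff: "left_star_le a b \<longleftrightarrow> x * b = x * a \<and> a \<in> right_ideal b"
proof -
  have "left_ideal (a\<^sup>\<star>) = left_ideal x" using core by (simp add: is_core_inverse_def)
  then have "a\<^sup>\<star> * b = a\<^sup>\<star> * a \<longleftrightarrow> x * b = x * a" by (rule left_ideal_eq_imp_mult_eq_iff)
  moreover have "right_ideal a \<subseteq> right_ideal b \<longleftrightarrow> a \<in> right_ideal b"
    unfolding right_ideal_subset_iff by (auto simp: right_ideal_def)
  ultimately show ?thesis unfolding left_star_le_def by auto
qed

lemma right_sharp_le_iff: "right_sharp_le a b \<longleftrightarrow> b * x = a * x \<and> a \<in> left_ideal b"
proof -
  have g: "group_inv a = x * x * a"
    using group_inv_eq core_inverse_group_inverse[OF core] by blast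
  have "x * x * a * (a * x) = x * (x * a * a) * x" by (simp add: mult.assoc)
  then have "x = x * x * a * (a * x)"
    using core_inverse_left_absorb[OF core] core_inverse_inner[OF core] by simp
  moreover have "x * x * a = x * (x * a)" by (simp add: mult.assoc)
  ultimately have "right_ideal (x * x * a) = right_ideal x"
    using right_ideal_subset_iff by blast
  then have "b * group_inv a = a * group_inv a \<longleftrightarrow> b * x = a * x"
    unfolding g by (rule right_ideal_eq_imp_mult_eq_iff)
  moreover have "left_ideal a \<subseteq> left_ideal b \<longleftrightarrow> a \<in> left_ideal b"
    unfolding left_ideal_subset_iff by (auto simp: left_ideal_def)
  ultimately show ?thesis unfolding right_sharp_le_def by auto
qed

lemma core_le_imp_left_star_le: "core_le a b \<Longrightarrow> left_star_le a b"
  using core_inverse_outer[OF core]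
  by (simp add: core_le_iff left_star_le_iff right_ideal_def) (metis mult.assoc)

lemma core_le_imp_right_sharp_le: "core_le a b \<Longrightarrow> right_sharp_le a b"
  using core_inverse_outer[OF core]
  by (simp add: core_le_iff right_sharp_le_iff left_ideal_def) (metis mult.assoc)

lemma core_le_iff_left_star_le_sandwich:
  "core_le a b \<longleftrightarrow> left_star_le a b \<and> b * x * b = a"
proof -
  have "b * x * b = a \<longleftrightarrow> b * x = a * x" if "left_star_le a b"
    using that left_star_le_iff
      sandwich_iff_right_eq[OF core_inverse_outer[OF core] core_inverse_inner[OF core]]
    by blast
  then show ?thesis
    using core_le_imp_left_star_le core_le_iff left_star_le_iff by blast
qed

lemma core_le_iff_right_sharp_le_sandwich:
  "core_le a b \<longleftrightarrow> right_sharp_le a b \<and> b * x * b = a"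
proof -
  have "b * x * b = a \<longleftrightarrow> x * b = x * a" if "right_sharp_le a b"
    using that right_sharp_le_iff
      sandwich_iff_left_eq[OF core_inverse_outer[OF core] core_inverse_inner[OF core]]
    by blast
  then show ?thesis
    using core_le_imp_right_sharp_le core_le_iff right_sharp_le_iff by blast
qed

end

context
  fixes a b x y :: "'a::ring_inv"
  assumes core_a: "is_core_inverse a x" and core_b: "is_core_inverse b y"
begin

lemma core_le_imp_mixed_eqs:
  assumes "core_le a b"
  shows "y * a * x = x" "x * a * y = x"
proof -
  have xb: "x * b = x * a" and bx: "b * x = a * x" using assms core_le_iff[OF core_a] by auto
  have "a \<in> right_ideal b"
    using assms core_le_imp_left_star_le[OF core_a] left_star_le_iff[OF core_a] by blast
  note range = core_inverse_range_fixed[OF core_b this]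
  have bxx: "b * x * x = x" using bx core_inverse_right_absorb[OF core_a] by simp
  have "y * a * x = y * b * (b * x * x)" using bx bxx by (simp add: mult.assoc)
  also have "\<dots> = (y * b * b) * x * x" by (simp add: mult.assoc)
  also have "\<dots> = x" using core_inverse_left_absorb[OF core_b] bxx by simp
  finally show "y * a * x = x" .
  have "x * a * y = x * x\<^sup>\<star> * (a\<^sup>\<star> * b * y)"
    using xb core_inverse_eq_invol[OF core_a] by (metis mult.assoc)
  then show "x * a * y = x" using range(2) core_inverse_eq_invol[OF core_a] by simp
qed

lemma core_le_iff_left_star_le_mixed:
  "core_le a b \<longleftrightarrow> left_star_le a b \<and> y * a * x = x"
proof (intro iffI conjI)
  assume asm: "left_star_le a b \<and> y * a * x = x"
  then have "x * b = x * a" "b * y * a = a"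
    using left_star_le_iff[OF core_a] core_inverse_range_fixed(1)[OF core_b] by auto
  moreover have "b * x = b * y * a * x" using asm by (simp add: mult.assoc)
  ultimately show "core_le a b" unfolding core_le_iff[OF core_a] by simp
qed (use core_le_imp_left_star_le[OF core_a] core_le_imp_mixed_eqs in auto)

lemma core_le_iff_left_star_le_outer:
  "core_le a b \<longleftrightarrow> left_star_le a b \<and> y * a * y = x"
proof (intro iffI conjI)
  assume "core_le a b"
  then have "y * a * x = x" "x * a * y = x" using core_le_imp_mixed_eqs by auto
  have "y * a * y = y * (a * x * a) * y" using core_inverse_outer[OF core_a] by simp
  also have "\<dots> = (y * a * x) * a * y" by (simp add: mult.assoc)
  also have "\<dots> = x" using \<open>y * a * x = x\<close> \<open>x * a * y = x\<close> by simp
  finally show "y * a * y = x" .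
next
  assume asm: "left_star_le a b \<and> y * a * y = x"
  then have xb: "x * b = x * a" and b_range: "a \<in> right_ideal b"
    using left_star_le_iff[OF core_a] by auto
  note range = core_inverse_range_fixed[OF core_b b_range]
  have "a\<^sup>\<star> * a * y = a\<^sup>\<star>" using asm range(2) by (simp add: left_star_le_def)
  then have "a * y = a * x" by (rule core_inverse_mult_eq[OF core_a])
  moreover have "b * x = b * y * a * y" using asm by (simp add: mult.assoc)
  ultimately show "core_le a b" using xb range(1) core_le_iff[OF core_a] by simp
qed (use core_le_imp_left_star_le[OF core_a] in auto)

lemma core_le_iff_right_sharp_le_mixed:
  "core_le a b \<longleftrightarrow> right_sharp_le a b \<and> x * a * y = x"
proof (intro iffI conjI)
  assume asm: "right_sharp_le a b \<and> x * a * y = x"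
  then obtain r where "a = r * b" and bx: "b * x = a * x"
    using right_sharp_le_iff[OF core_a] by (auto simp: left_ideal_def)
  then have "a * y * b = a" using core_inverse_outer[OF core_b] by (simp add: mult.assoc)
  then have "x * b = x * a" using asm by (metis mult.assoc)
  then show "core_le a b" using bx core_le_iff[OF core_a] by simp
qed (use core_le_imp_right_sharp_le[OF core_a] core_le_imp_mixed_eqs in auto)

end

theorem theorem3p2:
  fixes a b :: "'a::ring_inv"
  assumes "core_invertible a" and "core_invertible b"
  shows "(core_le a b \<longleftrightarrow> left_star_le a b \<and> b * core_inv a * b = a)
    \<and> (core_le a b \<longleftrightarrow> left_star_le a b \<and> core_inv b * a * core_inv a = core_inv a)
    \<and> (core_le a b \<longleftrightarrow> left_star_le a b \<and> core_inv b * a * core_inv b = core_inv a)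
    \<and> (core_le a b \<longleftrightarrow> right_sharp_le a b \<and> b * core_inv a * b = a)
    \<and> (core_le a b \<longleftrightarrow> right_sharp_le a b \<and> core_inv a * a * core_inv b = core_inv a)"
proof -
  have x: "is_core_inverse a (core_inv a)" and y: "is_core_inverse b (core_inv b)"
    using assms core_invertible_core_inv by blast+
  show ?thesis
    using core_le_iff_left_star_le_sandwich[OF x] core_le_iff_left_star_le_mixed[OF x y]
      core_le_iff_left_star_le_outer[OF x y] core_le_iff_right_sharp_le_sandwich[OF x]
      core_le_iff_right_sharp_le_mixed[OF x y]
    by blast
qed

end
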